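(* Let $\phi$ be an LTL formula. (f) Every finite chain of $\mathbf{AX}^{gen}$-atoms of $\phi$ is extensible (i.e., is a prefix of) an acceptable chain of $\mathbf{AX}^{gen}$-atoms, finite or infinite. (g) Every finite chain of $\mathbf{AX}^{inf}$-atoms of $\phi$ is extensible to an infinite acceptable chain of $\mathbf{AX}^{inf}$-atoms. (h) Every finite chain of $\mathbf{AX}^{fin}$-atoms of $\phi$ is extensible to a finite acceptable chain of $\mathbf{AX}^{fin}$-atoms.
   Context: LTL formulas: grammar $\phi ::= p\mid\neg\phi\mid\phi\wedge\psi\mid\bigcirc\phi\mid\phi\,\mathcal{U}\,\psi$ over propositions $p\in\Phi_0$; $\vee,\Rightarrow$ standard abbreviations; $\mathit{true}$ a fixed tautology, $\mathit{false}:=\neg\mathit{true}$, $\Diamond\phi:=\mathit{true}\,\mathcal{U}\,\phi$, $\overline{\bigcirc}\phi:=\neg\bigcirc\neg\phi$. Axiomatizations: $\mathbf{AX}^{gen}$ consists of Prop (all propositional tautology instances), MP (from $\phi$, $\phi\Rightarrow\psi$ infer $\psi$), T1: $\bigcirc\phi\wedge\bigcirc(\phi\Rightarrow\psi)\Rightarrow\bigcirc\psi$, T2': $\phi\,\mathcal{U}\,\psi\Leftrightarrow\psi\vee(\phi\wedge\overline{\bigcirc}(\phi\,\mathcal{U}\,\psi))$, T3': $\bigcirc\phi\Leftrightarrow(\bigcirc\mathit{false}\vee\overline{\bigcirc}\phi)$, RT1 (from $\phi$ infer $\bigcirc\phi$), RT2 (from $\phi'\Rightarrow\neg\psi\wedge\bigcirc\phi'$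 infer $\phi'\Rightarrow\neg(\phi\,\mathcal{U}\,\psi)$). $\mathbf{AX}^{inf}$ adds $\neg\bigcirc\mathit{false}$; $\mathbf{AX}^{fin}$ adds $\Diamond\bigcirc\mathit{false}$. For an axiomatization $ax$, a formula is $ax$-consistent if its negation is not provable in $ax$; a finite set is consistent if its conjunction is. Closure: $Cl'(\phi)$ is the smallest set $S$ with $\phi\in S$; $\mathit{true}\,\mathcal{U}\,\bigcirc\mathit{false}\in S$; $\neg\psi\in S\Rightarrow\psi\in S$; $\psi_1\wedge\psi_2\in S\Rightarrow\psi_1,\psi_2\in S$; $\bigcirc\psi\in S\Rightarrow\psi\in S$; $\bigcirc\neg\psi\in S\Rightarrow\bigcirc\psi\in S$; $\psi_1\,\mathcal{U}\,\psi_2\in S\Rightarrow\psi_1,\psi_2,\overline{\bigcirc}(\psi_1\,\mathcal{U}\,\psi_2)\in S$. $Cl(\phi)=Cl'(\phi)\cup\{\neg\psi:\psi\in Cl'(\phi)\}$. An $ax$-atom of $\phi$ is a maximal $ax$-consistent subset of $Cl(\phi)$; $\widehat V$ is the conjunction of its formulas. $V\to_{ax}W$ iff $\widehat V\wedge\overline{\bigcirc}\widehat W$ is $ax$-consistent. A chain of $ax$-atoms is a finite or infinite sequence $V_0,V_1,\dots$ with $V_i\to_{ax}V_{i+1}$ for consecutive indices. A chain is acceptable if for every index $i$ and every $\psi_1\,\mathcal{U}\,\psi_2\in V_i$ there is an index $j\ge i$ of the chain with $\psi_2\in V_j$ and $\psi_1\in V_i,\dots,V_{j-1}$. *)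

theory Defs
  imports Main "HOL-Library.Extended_Nat"
begin

datatype 'p ltl = Prop 'p | Neg "'p ltl" | And "'p ltl" "'p ltl"
  | Next "'p ltl" | Until "'p ltl" "'p ltl"

definition Or :: "'p ltl \<Rightarrow> 'p ltl \<Rightarrow> 'p ltl" where
  "Or a b = Neg (And (Neg a) (Neg b))"

definition Imp :: "'p ltl \<Rightarrow> 'p ltl \<Rightarrow> 'p ltl" where
  "Imp a b = Or (Neg a) b"

definition Iff :: "'p ltl \<Rightarrow> 'p ltl \<Rightarrow> 'p ltl" where
  "Iff a b = And (Imp a b) (Imp b a)"

definition TT :: "'p ltl" where
  "TT = Imp (Prop undefined) (Prop undefined)"

definition FF :: "'p ltl" where
  "FF = Neg TT"

definition Ev :: "'p ltl \<Rightarrow> 'p ltl" where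
  "Ev a = Until TT a"

definition WNext :: "'p ltl \<Rightarrow> 'p ltl" where
  "WNext a = Neg (Next (Neg a))"

text \<open>Evaluate a formula propositionally, treating Prop, Next and Until formulas as atoms.\<close>
fun peval :: "('p ltl \<Rightarrow> bool) \<Rightarrow> 'p ltl \<Rightarrow> bool" where
  "peval v (Neg a) = (\<not> peval v a)"
| "peval v (And a b) = (peval v a \<and> peval v b)"
| "peval v a = v a"

definition taut :: "'p ltl \<Rightarrow> bool" where
  "taut a \<longleftrightarrow> (\<forall>v. peval v a)"

text \<open>Provability in AX-gen extended by a set of extra axioms.\<close>
inductive prov :: "'p ltl set \<Rightarrow> 'p ltl \<Rightarrow> bool" for E :: "'p ltl set" where
  Extra: "a \<in> E \<Longrightarrow> prov E a"
| Prop: "taut a \<Longrightarrow> prov E a"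
| MP: "prov E a \<Longrightarrow> prov E (Imp a b) \<Longrightarrow> prov E b"
| T1: "prov E (Imp (And (Next a) (Next (Imp a b))) (Next b))"
| T2': "prov E (Iff (Until a b) (Or b (And a (WNext (Until a b)))))"
| T3': "prov E (Iff (Next a) (Or (Next FF) (WNext a)))"
| RT1: "prov E a \<Longrightarrow> prov E (Next a)"
| RT2: "prov E (Imp c (And (Neg b) (Next c))) \<Longrightarrow> prov E (Imp c (Neg (Until a b)))"

definition AXgen :: "'p ltl set" where "AXgen = {}"
definition AXinf :: "'p ltl set" where "AXinf = {Neg (Next FF)}"
definition AXfin :: "'p ltl set" where "AXfin = {Ev (Next FF)}"

definition consistent :: "'p ltl set \<Rightarrow> 'p ltl \<Rightarrow> bool" where
  "consistent E a \<longleftrightarrow> \<not> prov E (Neg a)"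

fun conj_list :: "'p ltl list \<Rightarrow> 'p ltl" where
  "conj_list [] = TT"
| "conj_list (a # as) = And a (conj_list as)"

definition conj_set :: "'p ltl set \<Rightarrow> 'p ltl" where
  "conj_set S = conj_list (SOME xs. set xs = S \<and> distinct xs)"

definition consistent_set :: "'p ltl set \<Rightarrow> 'p ltl set \<Rightarrow> bool" where
  "consistent_set E S \<longleftrightarrow> finite S \<and> consistent E (conj_set S)"

inductive_set cl' :: "'p ltl \<Rightarrow> 'p ltl set" for \<phi> :: "'p ltl" where
  base: "\<phi> \<in> cl' \<phi>"
| ev: "Until TT (Next FF) \<in> cl' \<phi>"
| neg: "Neg a \<in> cl' \<phi> \<Longrightarrow> a \<in> cl' \<phi>"
| and1: "And a b \<in> cl' \<phi> \<Longrightarrow> a \<in> cl' \<phi>"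
| and2: "And a b \<in> cl' \<phi> \<Longrightarrow> b \<in> cl' \<phi>"
| next1: "Next a \<in> cl' \<phi> \<Longrightarrow> a \<in> cl' \<phi>"
| nextneg: "Next (Neg a) \<in> cl' \<phi> \<Longrightarrow> Next a \<in> cl' \<phi>"
| until1: "Until a b \<in> cl' \<phi> \<Longrightarrow> a \<in> cl' \<phi>"
| until2: "Until a b \<in> cl' \<phi> \<Longrightarrow> b \<in> cl' \<phi>"
| until3: "Until a b \<in> cl' \<phi> \<Longrightarrow> WNext (Until a b) \<in> cl' \<phi>"

definition cl :: "'p ltl \<Rightarrow> 'p ltl set" where
  "cl \<phi> = cl' \<phi> \<union> Neg ` cl' \<phi>"

definition atom :: "'p ltl set \<Rightarrow> 'p ltl \<Rightarrow> 'p ltl set \<Rightarrow> bool" where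
  "atom E \<phi> V \<longleftrightarrow> V \<subseteq> cl \<phi> \<and> consistent_set E V \<and>
     (\<forall>W. V \<subset> W \<and> W \<subseteq> cl \<phi> \<longrightarrow> \<not> consistent_set E W)"

definition step :: "'p ltl set \<Rightarrow> 'p ltl set \<Rightarrow> 'p ltl set \<Rightarrow> bool" where
  "step E V W \<longleftrightarrow> consistent E (And (conj_set V) (WNext (conj_set W)))"

text \<open>A chain is represented by f :: nat => atom together with its length n :: enat
  (n = \<infinity> for infinite chains); only the indices i with i < n are meaningful.
  Chains are non-empty.\<close>
definition is_chain :: "'p ltl set \<Rightarrow> 'p ltl \<Rightarrow> (nat \<Rightarrow> 'p ltl set) \<Rightarrow> enat \<Rightarrow> bool" where
  "is_chain E \<phi> f n \<longleftrightarrow> n \<noteq> 0 \<and>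
     (\<forall>i. enat i < n \<longrightarrow> atom E \<phi> (f i)) \<and>
     (\<forall>i. enat (Suc i) < n \<longrightarrow> step E (f i) (f (Suc i)))"

definition acceptable :: "(nat \<Rightarrow> 'p ltl set) \<Rightarrow> enat \<Rightarrow> bool" where
  "acceptable f n \<longleftrightarrow> (\<forall>i a b. enat i < n \<longrightarrow> Until a b \<in> f i \<longrightarrow>
     (\<exists>j\<ge>i. enat j < n \<and> b \<in> f j \<and> (\<forall>k. i \<le> k \<and> k < j \<longrightarrow> a \<in> f k)))"

definition prefix_of :: "'p ltl set list \<Rightarrow> (nat \<Rightarrow> 'p ltl set) \<Rightarrow> enat \<Rightarrow> bool" where
  "prefix_of xs f n \<longleftrightarrow> enat (length xs) \<le> n \<and> (\<forall>i < length xs. f i = xs ! i)"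

end

(*
  Since the disjunction of all atoms is provable, an atom proving "not next false" has a
  successor atom, and the induction rule RT2 shows that every eventuality a U b of an atom can
  be fulfilled along some path of transitions.

  If the last atom of the chain contains <> next false, follow a path to an atom containing
  next false: there no eventuality is pending, so the resulting finite chain is acceptable.
  Otherwise, in AX-gen, not <> next false persists along transitions and rules out next false,
  as does the extra axiom of AX-inf everywhere. Then a round-robin schedule over the finitely
  many eventualities of the closure, at each step moving closer to the fulfilment of the
  currently scheduled one, yields an infinite acceptable chain. In AX-fin every atom contains
  <> next false.
*)

theory Submission
  imports Defs
begin

section \<open>Propositional reasoning inside the axiomatizations\<close>

lemma peval_Or [simp]: "peval v (Or a b) = (peval v a \<or> peval v b)"
  by (simp add: Or_def)

lemma peval_Imp [simp]: "peval v (Imp a b) = (peval v a \<longrightarrow> peval v b)"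
  by (simp add: Imp_def)

lemma peval_Iff [simp]: "peval v (Iff a b) = (peval v a \<longleftrightarrow> peval v b)"
  by (auto simp add: Iff_def)

lemma peval_TT [simp]: "peval v TT"
  by (simp add: TT_def)

lemma peval_FF [simp]: "\<not> peval v FF"
  by (simp add: FF_def)

lemma peval_WNext [simp]: "peval v (WNext a) = (\<not> v (Next (Neg a)))"
  by (simp add: WNext_def)

lemma peval_conj_list [simp]: "peval v (conj_list xs) = (\<forall>x\<in>set xs. peval v x)"
  by (induction xs) auto

lemma set_conj_set_enumeration:
  assumes "finite S"
  shows "set (SOME xs. set xs = S \<and> distinct xs) = S"
  using someI_ex[OF finite_distinct_list[OF assms]] by blast

lemma peval_conj_set [simp]: "finite S \<Longrightarrow> peval v (conj_set S) = (\<forall>x\<in>S. peval v x)"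
  by (simp add: conj_set_def set_conj_set_enumeration)

definition disj_set :: "'p ltl set \<Rightarrow> 'p ltl" where
  "disj_set S = Neg (conj_set (Neg ` S))"

lemma peval_disj_set [simp]: "finite S \<Longrightarrow> peval v (disj_set S) = (\<exists>x\<in>S. peval v x)"
  by (simp add: disj_set_def)

lemma prov_tautI: "(\<And>v. peval v a) \<Longrightarrow> prov E a"
  by (auto intro: prov.Prop simp: taut_def)

lemma prov_taut_consequence:
  assumes "finite H" "\<forall>h\<in>H. prov E h" "\<And>v. \<forall>h\<in>H. peval v h \<Longrightarrow> peval v c"
  shows "prov E c"
  using assms
proof (induction H arbitrary: c rule: finite_induct)
  case empty
  then show ?case by (auto intro: prov_tautI)
next
  case (insert h H)
  have "prov E (Imp h c)"
    by (rule insert.IH) (use insert.prems in auto)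
  with insert.prems show ?case by (blast intro: prov.MP)
qed

lemma prov_taut_consequence1:
  "prov E a \<Longrightarrow> (\<And>v. peval v a \<Longrightarrow> peval v c) \<Longrightarrow> prov E c"
  using prov_taut_consequence[of "{a}" E c] by auto

lemma prov_taut_consequence2:
  "prov E a \<Longrightarrow> prov E b \<Longrightarrow> (\<And>v. peval v a \<Longrightarrow> peval v b \<Longrightarrow> peval v c) \<Longrightarrow> prov E c"
  using prov_taut_consequence[of "{a, b}" E c] by auto

lemma prov_Next_mono: "prov E (Imp a b) \<Longrightarrow> prov E (Imp (Next a) (Next b))"
  by (rule prov_taut_consequence2[OF prov.RT1 prov.T1[of E a b]]) auto

lemma prov_imp_Next_conj_list:
  "\<forall>x\<in>set xs. prov E (Imp h (Next x)) \<Longrightarrow> prov E (Imp h (Next (conj_list xs)))"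
proof (induction xs)
  case Nil
  have "prov E (Next TT)"
    by (rule prov.RT1, rule prov_tautI) simp
  then show ?case
    by (rule prov_taut_consequence1) simp
next
  case (Cons x xs)
  let ?r = "conj_list xs"
  have hx: "prov E (Imp h (Next x))" and hr: "prov E (Imp h (Next ?r))"
    using Cons by simp_all
  have "prov E (Imp (Next x) (Next (Imp ?r (And x ?r))))"
    by (rule prov_Next_mono, rule prov_tautI) simp
  with hx have "prov E (Imp h (Next (Imp ?r (And x ?r))))"
    by (rule prov_taut_consequence2) simp
  then have "prov E (Imp h (Imp (Next ?r) (Next (And x ?r))))"
    using prov.T1[of E ?r "And x ?r"] by (rule prov_taut_consequence2) auto
  with hr show ?case
    by (rule prov_taut_consequence2) simp
qed

lemma prov_imp_Next_conj_set:
  "finite X \<Longrightarrow> \<forall>x\<in>X. prov E (Imp h (Next x)) \<Longrightarrow> prov E (Imp h (Next (conj_set X)))"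
  unfolding conj_set_def by (intro prov_imp_Next_conj_list) (simp add: set_conj_set_enumeration)

section \<open>Finiteness of the closure\<close>

fun subformulas :: "'p ltl \<Rightarrow> 'p ltl set" where
  "subformulas (Prop p) = {Prop p}"
| "subformulas (Neg a) = insert (Neg a) (subformulas a)"
| "subformulas (And a b) = insert (And a b) (subformulas a \<union> subformulas b)"
| "subformulas (Next a) = insert (Next a) (subformulas a)"
| "subformulas (Until a b) = insert (Until a b) (subformulas a \<union> subformulas b)"

lemma finite_subformulas: "finite (subformulas a)"
  by (induction a) auto

lemma subformulas_refl: "a \<in> subformulas a"
  by (cases a) auto

lemma subformulas_trans: "b \<in> subformulas a \<Longrightarrow> c \<in> subformulas b \<Longrightarrow> c \<in> subformulas a"
  by (induction a) auto

lemma finite_cl': "finite (cl' \<phi>)"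
proof -
  define T where "T = subformulas \<phi> \<union> subformulas (Until TT (Next FF))"
  have T_closed: "a \<in> T" if "b \<in> T" "a \<in> subformulas b" for a b
    using that subformulas_trans unfolding T_def by blast
  have T_base: "\<phi> \<in> T" "Until TT (Next FF) \<in> T"
    unfolding T_def using subformulas_refl by blast+
  have T_components: "Neg a \<in> T \<Longrightarrow> a \<in> T" "And a b \<in> T \<Longrightarrow> a \<in> T \<and> b \<in> T"
    "Next a \<in> T \<Longrightarrow> a \<in> T" "Until a b \<in> T \<Longrightarrow> a \<in> T \<and> b \<in> T" for a b
    using T_closed subformulas_refl by fastforce+
  have "cl' \<phi> \<subseteq> T \<union> Neg ` T \<union> Next ` T \<union> Next ` Neg ` T \<union> Neg ` Next ` Neg ` T" (is "_ \<subseteq> ?B")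
  proof
    fix x assume "x \<in> cl' \<phi>"
    then show "x \<in> ?B"
      by induction (auto simp: WNext_def T_base dest: T_components T_components(1)[OF T_components(3)])
  qed
  then show ?thesis
    by (rule finite_subset) (simp add: T_def finite_subformulas)
qed

lemma finite_cl: "finite (cl \<phi>)"
  unfolding cl_def using finite_cl' by blast

section \<open>Atoms\<close>

lemma atom_finite: "atom E \<phi> V \<Longrightarrow> finite V"
  unfolding atom_def consistent_set_def by blast

lemma atom_consistent: "atom E \<phi> V \<Longrightarrow> \<not> prov E (Neg (conj_set V))"
  unfolding atom_def consistent_set_def consistent_def by blast

lemma atom_subset_cl: "atom E \<phi> V \<Longrightarrow> V \<subseteq> cl \<phi>"
  unfolding atom_def by blast

lemma finite_atoms: "finite {V. atom E \<phi> V}"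
  using finite_cl by (rule finite_subset[rotated, OF finite_Pow_iff[THEN iffD2]]) (auto dest: atom_subset_cl)

lemma cl'_subset_cl: "x \<in> cl' \<phi> \<Longrightarrow> x \<in> cl \<phi>"
  unfolding cl_def by blast

lemma Neg_cl'_subset_cl: "x \<in> cl' \<phi> \<Longrightarrow> Neg x \<in> cl \<phi>"
  unfolding cl_def by blast

lemma cl_Neg_D: "Neg x \<in> cl \<phi> \<Longrightarrow> x \<in> cl' \<phi>"
  unfolding cl_def by (auto intro: cl'.neg)

lemma cl_Until_D: "Until a b \<in> cl \<phi> \<Longrightarrow> Until a b \<in> cl' \<phi>"
  unfolding cl_def by auto

lemma atom_proves_Neg_nonmember:
  assumes V: "atom E \<phi> V" and "\<psi> \<in> cl \<phi>" "\<psi> \<notin> V"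
  shows "prov E (Imp (conj_set V) (Neg \<psi>))"
proof -
  have "V \<subset> insert \<psi> V" "insert \<psi> V \<subseteq> cl \<phi>"
    using assms atom_subset_cl by auto
  then have "\<not> consistent_set E (insert \<psi> V)"
    using V unfolding atom_def by blast
  then have "prov E (Neg (conj_set (insert \<psi> V)))"
    using atom_finite[OF V] unfolding consistent_set_def consistent_def by simp
  then show ?thesis
    by (rule prov_taut_consequence1) (auto simp add: atom_finite[OF V])
qed

lemma atom_member_if_proves:
  assumes V: "atom E \<phi> V" and "\<psi> \<in> cl \<phi>" "prov E (Imp (conj_set V) \<psi>)"
  shows "\<psi> \<in> V"
proof (rule ccontr)
  assume "\<psi> \<notin> V"
  with assms have "prov E (Imp (conj_set V) (Neg \<psi>))"
    by (blast intro: atom_proves_Neg_nonmember)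
  with assms(3) have "prov E (Neg (conj_set V))"
    by (rule prov_taut_consequence2) simp
  with V show False
    by (simp add: atom_consistent)
qed

lemma atom_member_or_Neg_member:
  assumes V: "atom E \<phi> V" and \<psi>: "\<psi> \<in> cl' \<phi>"
  shows "\<psi> \<in> V \<or> Neg \<psi> \<in> V"
proof (rule ccontr)
  assume "\<not> (\<psi> \<in> V \<or> Neg \<psi> \<in> V)"
  then have "prov E (Imp (conj_set V) (Neg \<psi>))" "prov E (Imp (conj_set V) (Neg (Neg \<psi>)))"
    using V \<psi> by (auto intro: atom_proves_Neg_nonmember cl'_subset_cl Neg_cl'_subset_cl)
  then have "prov E (Neg (conj_set V))"
    by (rule prov_taut_consequence2) simp
  with V show False
    by (simp add: atom_consistent)
qed

lemma TT_in_atom: "atom E \<phi> V \<Longrightarrow> TT \<in> V"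
  by (rule atom_member_if_proves) (auto intro: prov_tautI cl'_subset_cl cl'.until1[OF cl'.ev])

definition closure_literals :: "'p ltl \<Rightarrow> 'p ltl set \<Rightarrow> 'p ltl set" where
  "closure_literals \<phi> T = T \<union> Neg ` (cl' \<phi> - T)"

lemma atom_closure_literals:
  assumes T: "T \<subseteq> cl' \<phi>" and cons: "consistent_set E (closure_literals \<phi> T)"
  shows "atom E \<phi> (closure_literals \<phi> T)"
  unfolding atom_def
proof (intro conjI allI impI cons)
  show "closure_literals \<phi> T \<subseteq> cl \<phi>"
    using T unfolding closure_literals_def cl_def by blast
  fix W assume W: "closure_literals \<phi> T \<subset> W \<and> W \<subseteq> cl \<phi>"
  have "\<exists>z. z \<in> W \<and> Neg z \<in> W"
  proof -
    obtain x where x: "x \<in> W" "x \<notin> closure_literals \<phi> T"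
      using W by blast
    then consider "x \<in> cl' \<phi>" | y where "x = Neg y" "y \<in> cl' \<phi>"
      using W unfolding cl_def by blast
    then show ?thesis
      using x W unfolding closure_literals_def by cases blast+
  qed
  moreover have "finite W"
    using W finite_cl finite_subset by blast
  ultimately have "prov E (Neg (conj_set W))"
    by (auto intro!: prov_tautI) (metis peval.simps(1))
  then show "\<not> consistent_set E W"
    unfolding consistent_set_def consistent_def by blast
qed

lemma prov_disj_atoms: "prov E (disj_set (conj_set ` {V. atom E \<phi> V}))"
proof -
  let ?I = "{T. T \<subseteq> cl' \<phi> \<and> \<not> consistent_set E (closure_literals \<phi> T)}"
  have finite_literals: "finite (closure_literals \<phi> T)" if "T \<subseteq> cl' \<phi>" for T
    using that finite_cl' finite_subset unfolding closure_literals_def by blast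
  show ?thesis
  proof (rule prov_taut_consequence[of "(\<lambda>T. Neg (conj_set (closure_literals \<phi> T))) ` ?I"])
    show "finite ((\<lambda>T. Neg (conj_set (closure_literals \<phi> T))) ` ?I)"
      by (rule finite_imageI, rule finite_subset[of _ "Pow (cl' \<phi>)"]) (auto simp: finite_cl')
    show "\<forall>h\<in>(\<lambda>T. Neg (conj_set (closure_literals \<phi> T))) ` ?I. prov E h"
      using finite_literals unfolding consistent_set_def consistent_def by blast
  next
    fix v assume refuted: "\<forall>h\<in>(\<lambda>T. Neg (conj_set (closure_literals \<phi> T))) ` ?I. peval v h"
    define T where "T = {x \<in> cl' \<phi>. peval v x}"
    have T_sub: "T \<subseteq> cl' \<phi>"
      unfolding T_def by blast
    have sat: "peval v (conj_set (closure_literals \<phi> T))"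
      using finite_literals[OF T_sub] unfolding closure_literals_def T_def by auto
    have "consistent_set E (closure_literals \<phi> T)"
    proof (rule ccontr)
      assume "\<not> consistent_set E (closure_literals \<phi> T)"
      then have "peval v (Neg (conj_set (closure_literals \<phi> T)))"
        using refuted T_sub by blast
      with sat show False
        by simp
    qed
    with sat T_sub show "peval v (disj_set (conj_set ` {V. atom E \<phi> V}))"
      using finite_atoms[of E \<phi>] by (auto dest: atom_closure_literals)
  qed
qed

section \<open>Transitions between atoms\<close>

lemma step_iff_not_proves_Next_Neg:
  "step E V W \<longleftrightarrow> \<not> prov E (Imp (conj_set V) (Next (Neg (conj_set W))))"
proof -
  let ?A = "Neg (And (conj_set V) (WNext (conj_set W)))"
    and ?B = "Imp (conj_set V) (Next (Neg (conj_set W)))"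
  have "prov E ?A \<Longrightarrow> prov E ?B" "prov E ?B \<Longrightarrow> prov E ?A"
    by (erule prov_taut_consequence1, simp)+
  then show ?thesis
    unfolding step_def consistent_def by blast
qed

lemma not_step_if_proves_Next:
  assumes "prov E (Imp (conj_set V) (Next \<chi>))" "finite W"
    and "\<And>v. peval v \<chi> \<Longrightarrow> \<exists>x\<in>W. \<not> peval v x"
  shows "\<not> step E V W"
proof -
  have "prov E (Imp (Next \<chi>) (Next (Neg (conj_set W))))"
    using assms(2,3) by (intro prov_Next_mono prov_tautI) simp
  with assms(1) have "prov E (Imp (conj_set V) (Next (Neg (conj_set W))))"
    by (rule prov_taut_consequence2) simp
  then show ?thesis
    by (simp add: step_iff_not_proves_Next_Neg)
qed

lemma atom_Until_in_cl': "atom E \<phi> V \<Longrightarrow> Until a b \<in> V \<Longrightarrow> Until a b \<in> cl' \<phi>"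
  by (auto dest: atom_subset_cl intro: cl_Until_D)

lemma atom_proves_pending_Until:
  assumes V: "atom E \<phi> V" and "Until a b \<in> V" "b \<notin> V"
  shows "prov E (Imp (conj_set V) (And a (WNext (Until a b))))"
proof -
  have "b \<in> cl' \<phi>"
    using assms by (blast intro: atom_Until_in_cl' cl'.until2)
  with assms have "prov E (Imp (conj_set V) (Neg b))"
    by (blast intro: atom_proves_Neg_nonmember cl'_subset_cl)
  with prov.T2'[of E a b] show ?thesis
    by (rule prov_taut_consequence2) (use assms(2) atom_finite[OF V] in auto)
qed

lemma Until_pending_left:
  assumes "atom E \<phi> V" "Until a b \<in> V" "b \<notin> V"
  shows "a \<in> V"
proof (rule atom_member_if_proves[OF assms(1)])
  show "a \<in> cl \<phi>"
    using assms by (blast intro: cl'_subset_cl cl'.until1 atom_Until_in_cl')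
  show "prov E (Imp (conj_set V) a)"
    using atom_proves_pending_Until[OF assms] by (rule prov_taut_consequence1) simp
qed

lemma Until_pending_step:
  assumes V: "atom E \<phi> V" and W: "atom E \<phi> W" and "step E V W" "Until a b \<in> V" "b \<notin> V"
  shows "Until a b \<in> W"
proof (rule ccontr)
  let ?U = "Until a b"
  assume "?U \<notin> W"
  then have "Neg ?U \<in> W"
    using atom_member_or_Neg_member[OF W] atom_Until_in_cl'[OF V] assms(4) by blast
  have "prov E (Imp (conj_set V) (Next ?U))"
    using atom_proves_pending_Until[OF V assms(4,5)] prov.T3'[of E ?U]
    by (rule prov_taut_consequence2) auto
  then have "\<not> step E V W"
    by (rule not_step_if_proves_Next) (use \<open>Neg ?U \<in> W\<close> atom_finite[OF W] in force)+
  with assms(3) show False by contradiction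
qed

lemma Neg_Until_step:
  assumes V: "atom E \<phi> V" and W: "atom E \<phi> W" and "step E V W" "Neg (Until a b) \<in> V" "a \<in> V"
  shows "Neg (Until a b) \<in> W"
proof (rule ccontr)
  let ?U = "Until a b"
  assume "Neg ?U \<notin> W"
  moreover have "?U \<in> cl' \<phi>"
    using assms(4) atom_subset_cl[OF V] by (blast intro: cl_Neg_D)
  ultimately have "?U \<in> W"
    using atom_member_or_Neg_member[OF W] by blast
  have "prov E (Imp (conj_set V) (Next (Neg ?U)))"
    using prov.T2'[of E a b] by (rule prov_taut_consequence1) (use assms(4,5) atom_finite[OF V] in auto)
  then have "\<not> step E V W"
    by (rule not_step_if_proves_Next) (use \<open>?U \<in> W\<close> atom_finite[OF W] in force)+
  with assms(3) show False by contradiction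
qed

lemma atom_never_final:
  assumes "atom E \<phi> V" "Neg (Until TT (Next FF)) \<in> V"
  shows "prov E (Imp (conj_set V) (Neg (Next FF)))"
  using prov.T2'[of E TT "Next FF"] by (rule prov_taut_consequence1) (use assms atom_finite in force)

lemma Next_FF_fulfils_Until:
  assumes V: "atom E \<phi> V" and "Next FF \<in> V" "Until a b \<in> V"
  shows "b \<in> V"
proof (rule ccontr)
  assume "b \<notin> V"
  have "prov E (Imp (Next FF) (Next (Neg (Until a b))))"
    by (intro prov_Next_mono prov_tautI) simp
  with atom_proves_pending_Until[OF V assms(3) \<open>b \<notin> V\<close>]
  have "prov E (Neg (conj_set V))"
    by (rule prov_taut_consequence2) (use assms(2) atom_finite[OF V] in force)
  with V show False
    by (simp add: atom_consistent)
qed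

section \<open>Successors and reachability of eventualities\<close>

lemma proves_Next_disj_of_successors:
  assumes "S \<subseteq> {W. atom E \<phi> W}" and succ: "\<And>W. atom E \<phi> W \<Longrightarrow> step E V W \<Longrightarrow> W \<in> S"
  shows "prov E (Imp (conj_set V) (Next (disj_set (conj_set ` S))))"
proof -
  let ?A = "{W. atom E \<phi> W}"
  let ?X = "Neg ` conj_set ` (?A - S)"
  have V_X: "prov E (Imp (conj_set V) (Next (conj_set ?X)))"
  proof (rule prov_imp_Next_conj_set)
    show "finite ?X"
      using finite_atoms by blast
    show "\<forall>x\<in>?X. prov E (Imp (conj_set V) (Next x))"
      using succ by (auto simp: step_iff_not_proves_Next_Neg)
  qed
  have "prov E (Imp (conj_set ?X) (disj_set (conj_set ` S)))"
    using prov_disj_atoms[of E \<phi>]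
    by (rule prov_taut_consequence1) (use finite_atoms[of E \<phi>] assms(1) finite_subset in fastforce)
  then have "prov E (Imp (Next (conj_set ?X)) (Next (disj_set (conj_set ` S))))"
    by (rule prov_Next_mono)
  with V_X show ?thesis
    by (rule prov_taut_consequence2) simp
qed

lemma atom_has_successor:
  assumes V: "atom E \<phi> V" and "prov E (Imp (conj_set V) (Neg (Next FF)))"
  shows "\<exists>W. atom E \<phi> W \<and> step E V W"
proof (rule ccontr)
  assume "\<nexists>W. atom E \<phi> W \<and> step E V W"
  then have "prov E (Imp (conj_set V) (Next (disj_set (conj_set ` {}))))"
    by (intro proves_Next_disj_of_successors) auto
  moreover have "prov E (Imp (Next (disj_set (conj_set ` {}))) (Next FF))"
    by (intro prov_Next_mono prov_tautI) simp
  ultimately have "prov E (Imp (conj_set V) (Next FF))"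
    by (rule prov_taut_consequence2) simp
  with assms(2) have "prov E (Neg (conj_set V))"
    by (rule prov_taut_consequence2) simp
  with V show False
    by (simp add: atom_consistent)
qed

fun reaches :: "'p ltl set \<Rightarrow> 'p ltl \<Rightarrow> 'p ltl \<Rightarrow> nat \<Rightarrow> 'p ltl set \<Rightarrow> bool" where
  "reaches E \<phi> b 0 V \<longleftrightarrow> b \<in> V"
| "reaches E \<phi> b (Suc n) V \<longleftrightarrow> (\<exists>W. atom E \<phi> W \<and> step E V W \<and> reaches E \<phi> b n W)"

lemma transition_closed_atoms_refute_Until:
  assumes S: "S \<subseteq> {W. atom E \<phi> W}" and "b \<in> cl \<phi>" and no_b: "\<And>W. W \<in> S \<Longrightarrow> b \<notin> W"
    and closed: "\<And>W W'. W \<in> S \<Longrightarrow> atom E \<phi> W' \<Longrightarrow> step E W W' \<Longrightarrow> W' \<in> S"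
  shows "prov E (Imp (disj_set (conj_set ` S)) (Neg (Until a b)))"
proof -
  define c where "c = disj_set (conj_set ` S)"
  have fin_S: "finite S"
    using finite_atoms[of E \<phi>] S by (rule rev_finite_subset)
  have c_invariant: "prov E (Imp (conj_set W) (And (Neg b) (Next c)))" if "W \<in> S" for W
  proof -
    have "prov E (Imp (conj_set W) (Neg b))"
      using that S no_b \<open>b \<in> cl \<phi>\<close> by (blast intro: atom_proves_Neg_nonmember)
    moreover have "prov E (Imp (conj_set W) (Next c))"
      unfolding c_def using closed S that by (intro proves_Next_disj_of_successors) blast+
    ultimately show ?thesis
      by (rule prov_taut_consequence2) simp
  qed
  have "prov E (Imp c (And (Neg b) (Next c)))"
  proof (rule prov_taut_consequence[of "(\<lambda>W. Imp (conj_set W) (And (Neg b) (Next c))) ` S"])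
    fix v assume "\<forall>h\<in>(\<lambda>W. Imp (conj_set W) (And (Neg b) (Next c))) ` S. peval v h"
    then show "peval v (Imp c (And (Neg b) (Next c)))"
      unfolding c_def using fin_S by (simp del: peval.simps(2))
  qed (use fin_S c_invariant in blast)+
  then show ?thesis
    unfolding c_def by (rule prov.RT2)
qed

lemma eventuality_reachable:
  assumes V: "atom E \<phi> V" "Until a b \<in> V"
  shows "\<exists>n. reaches E \<phi> b n V"
proof (rule ccontr)
  assume "\<nexists>n. reaches E \<phi> b n V"
  define S where "S = {W. atom E \<phi> W \<and> Until a b \<in> W \<and> (\<nexists>n. reaches E \<phi> b n W)}"
  have "V \<in> S"
    unfolding S_def using V \<open>\<nexists>n. reaches E \<phi> b n V\<close> by blast
  have S_atom: "atom E \<phi> W" "Until a b \<in> W" "b \<notin> W" if "W \<in> S" for W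
    using that reaches.simps(1) unfolding S_def by blast+
  have S_step: "W' \<in> S" if "W \<in> S" "atom E \<phi> W'" "step E W W'" for W W'
  proof -
    have "\<nexists>n. reaches E \<phi> b n W'"
    proof
      assume "\<exists>n. reaches E \<phi> b n W'"
      then have "\<exists>n. reaches E \<phi> b (Suc n) W"
        using that(2,3) by auto
      with \<open>W \<in> S\<close> show False
        unfolding S_def by blast
    qed
    moreover have "Until a b \<in> W'"
      using Until_pending_step[OF S_atom(1)[OF that(1)] that(2,3) S_atom(2,3)[OF that(1)]] .
    ultimately show ?thesis
      unfolding S_def using that(2) by blast
  qed
  have "b \<in> cl \<phi>"
    using V by (blast intro: cl'_subset_cl cl'.until2 atom_Until_in_cl')
  then have S_refutes_Until: "prov E (Imp (disj_set (conj_set ` S)) (Neg (Until a b)))"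
    using S_atom S_step by (intro transition_closed_atoms_refute_Until) blast+
  have "finite S"
    using finite_atoms[of E \<phi>] unfolding S_def by (rule rev_finite_subset) blast
  then have V_S: "peval v (disj_set (conj_set ` S))" if "\<forall>x\<in>V. peval v x" for v
    using that atom_finite[OF V(1)] by (auto intro!: bexI[OF _ \<open>V \<in> S\<close>])
  have "prov E (Neg (conj_set V))"
    using S_refutes_Until by (rule prov_taut_consequence1) (use V V_S atom_finite[OF V(1)] in force)
  with V show False
    by (simp add: atom_consistent)
qed

section \<open>Chains\<close>

lemma is_chain_atom: "is_chain E \<phi> f n \<Longrightarrow> enat i < n \<Longrightarrow> atom E \<phi> (f i)"
  unfolding is_chain_def by blast

lemma is_chain_step: "is_chain E \<phi> f n \<Longrightarrow> enat (Suc i) < n \<Longrightarrow> step E (f i) (f (Suc i))"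
  unfolding is_chain_def by blast

lemma reaches_chain:
  "reaches E \<phi> b n V \<Longrightarrow> atom E \<phi> V \<Longrightarrow>
    \<exists>p. p 0 = V \<and> b \<in> p n \<and> is_chain E \<phi> p (enat (Suc n))"
proof (induction n arbitrary: V)
  case 0
  then show ?case
    by (intro exI[of _ "\<lambda>_. V"]) (auto simp: is_chain_def zero_enat_def)
next
  case (Suc n)
  then obtain W where "step E V W" "atom E \<phi> W" "reaches E \<phi> b n W"
    by auto
  with Suc.IH obtain p where p: "p 0 = W" "b \<in> p n" and p_chain: "is_chain E \<phi> p (enat (Suc n))"
    by blast
  have "step E (case_nat V p i) (p i)" if "i \<le> n" for i
    using p \<open>step E V W\<close> is_chain_step[OF p_chain, of "i - 1"] that by (cases i) auto
  then show ?case
    using Suc.prems p is_chain_atom[OF p_chain]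
    by (intro exI[of _ "case_nat V p"]) (auto simp: is_chain_def zero_enat_def split: nat.split)
qed

lemma Until_persists_in_chain:
  assumes ch: "is_chain E \<phi> f n" and "Until a b \<in> f i" "i \<le> k" "enat k < n"
    and "\<forall>l. i \<le> l \<and> l < k \<longrightarrow> b \<notin> f l"
  shows "Until a b \<in> f k"
  using assms(3-5)
proof (induction k)
  case 0
  then show ?case using assms(2) by simp
next
  case (Suc k)
  show ?case
  proof (cases "i = Suc k")
    case True
    then show ?thesis using assms(2) by simp
  next
    case False
    then have "i \<le> k" "enat k < n"
      using Suc.prems(1,2) Suc_ile_eq order_less_imp_le by auto
    with Suc have "Until a b \<in> f k" "b \<notin> f k"
      by auto
    then show ?thesis
      using Until_pending_step is_chain_atom[OF ch \<open>enat k < n\<close>]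
        is_chain_atom[OF ch Suc.prems(2)] is_chain_step[OF ch Suc.prems(2)]
      by blast
  qed
qed

definition fulfils_from :: "nat \<Rightarrow> (nat \<Rightarrow> 'p ltl set) \<Rightarrow> enat \<Rightarrow> bool" where
  "fulfils_from k f n \<longleftrightarrow>
     (\<forall>i a b. k \<le> i \<longrightarrow> enat i < n \<longrightarrow> Until a b \<in> f i \<longrightarrow> (\<exists>j\<ge>i. enat j < n \<and> b \<in> f j))"

lemma acceptable_if_fulfils:
  assumes ch: "is_chain E \<phi> f n" and "fulfils_from 0 f n"
  shows "acceptable f n"
  unfolding acceptable_def
proof (intro allI impI)
  fix i a b assume i: "enat i < n" and U: "Until a b \<in> f i"
  let ?Q = "\<lambda>j. i \<le> j \<and> enat j < n \<and> b \<in> f j"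
  define j where "j = (LEAST j. ?Q j)"
  have "\<exists>j. ?Q j"
    using assms(2) i U unfolding fulfils_from_def by blast
  then have Qj: "?Q j"
    unfolding j_def by (rule LeastI_ex)
  have before_j: "enat l < n \<and> b \<notin> f l" if "i \<le> l" "l < j" for l
  proof
    show "enat l < n"
      using Qj that(2) by (metis enat_ord_simps(2) order.strict_trans)
    with that show "b \<notin> f l"
      using not_less_Least[of l ?Q] unfolding j_def by blast
  qed
  have "a \<in> f l" if "i \<le> l" "l < j" for l
  proof (rule Until_pending_left)
    show "atom E \<phi> (f l)" "b \<notin> f l"
      using before_j[OF that] is_chain_atom[OF ch] by blast+
    show "Until a b \<in> f l"
      using Until_persists_in_chain[OF ch U] before_j that by (simp add: less_imp_le_nat)
  qed
  with Qj show "\<exists>j\<ge>i. enat j < n \<and> b \<in> f j \<and> (\<forall>k. i \<le> k \<and> k < j \<longrightarrow> a \<in> f k)"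
    by blast
qed

lemma chain_acceptableI:
  assumes ch: "is_chain E \<phi> f n" and "enat k < n" "fulfils_from k f n"
  shows "acceptable f n"
proof (rule acceptable_if_fulfils[OF ch], unfold fulfils_from_def, intro allI impI)
  fix i a b assume i: "enat i < n" and U: "Until a b \<in> f i"
  show "\<exists>j\<ge>i. enat j < n \<and> b \<in> f j"
  proof (cases "\<exists>j. i \<le> j \<and> j < k \<and> b \<in> f j")
    case True
    then obtain j where "i \<le> j" "j < k" "b \<in> f j"
      by blast
    moreover have "enat j < n"
      using \<open>j < k\<close> assms(2) by (metis enat_ord_simps(2) order.strict_trans)
    ultimately show ?thesis
      by blast
  next
    case False
    define k' where "k' = max i k"
    have "enat k' < n"
      using i assms(2) by (simp add: k'_def max_def)
    moreover have "\<forall>l. i \<le> l \<and> l < k' \<longrightarrow> b \<notin> f l"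
      using False by (auto simp: k'_def)
    ultimately have "Until a b \<in> f k'"
      using Until_persists_in_chain[OF ch U] by (simp add: k'_def)
    with assms(3) \<open>enat k' < n\<close> obtain j where "j \<ge> k'" "enat j < n" "b \<in> f j"
      unfolding fulfils_from_def k'_def by (meson max.cobounded2)
    then show ?thesis
      by (auto simp: k'_def)
  qed
qed

lemma list_chain_last:
  assumes "is_chain E \<phi> (nth xs) (enat (length xs))"
  shows "xs \<noteq> []" "atom E \<phi> (last xs)"
proof -
  show "xs \<noteq> []"
    using assms unfolding is_chain_def by (auto simp: zero_enat_def)
  then show "atom E \<phi> (last xs)"
    using is_chain_atom[OF assms, of "length xs - 1"] by (simp add: last_conv_nth)
qed

definition extend_chain :: "'a list \<Rightarrow> (nat \<Rightarrow> 'a) \<Rightarrow> nat \<Rightarrow> 'a" where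
  "extend_chain xs p i = (if i < length xs then xs ! i else p (i - (length xs - 1)))"

lemma extend_chain_tail:
  assumes "xs \<noteq> []" "p 0 = last xs" "length xs - 1 \<le> i"
  shows "extend_chain xs p i = p (i - (length xs - 1))"
  using assms by (cases "i = length xs - 1") (auto simp: extend_chain_def last_conv_nth)

lemma is_chain_extend_chain:
  assumes xs: "is_chain E \<phi> (nth xs) (enat (length xs))"
    and p: "is_chain E \<phi> p n" "p 0 = last xs"
  shows "is_chain E \<phi> (extend_chain xs p) (enat (length xs - 1) + n)"
proof -
  let ?k = "length xs - 1"
  have "xs \<noteq> []"
    using list_chain_last[OF xs] by blast
  have n: "n \<noteq> 0"
    using p unfolding is_chain_def by blast
  have shift: "enat (i - ?k) < n" if "enat i < enat ?k + n" "?k \<le> i" for i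
    using that by (cases n) auto
  note tail = extend_chain_tail[of xs p, OF \<open>xs \<noteq> []\<close> p(2)]
  show ?thesis
    unfolding is_chain_def
  proof (intro conjI allI impI)
    show "enat ?k + n \<noteq> 0"
      using n by (cases n) (simp_all add: zero_enat_def)
    fix i
    show "atom E \<phi> (extend_chain xs p i)" if "enat i < enat ?k + n"
    proof (cases "i < length xs")
      case True
      then show ?thesis
        using is_chain_atom[OF xs] by (simp add: extend_chain_def)
    next
      case False
      then show ?thesis
        using tail is_chain_atom[OF p(1)] shift[OF that] by simp
    qed
    show "step E (extend_chain xs p i) (extend_chain xs p (Suc i))" if "enat (Suc i) < enat ?k + n"
    proof (cases "Suc i < length xs")
      case True
      then show ?thesis
        using is_chain_step[OF xs] by (simp add: extend_chain_def)
    next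
      case False
      then have "Suc i - ?k = Suc (i - ?k)"
        by simp
      with False show ?thesis
        using tail is_chain_step[OF p(1)] shift[OF that] by simp
    qed
  qed
qed

lemma prefix_of_extend_chain:
  "xs \<noteq> [] \<Longrightarrow> n \<noteq> 0 \<Longrightarrow> prefix_of xs (extend_chain xs p) (enat (length xs - 1) + n)"
  unfolding prefix_of_def extend_chain_def by (cases n) (auto simp: zero_enat_def)

section \<open>Fair infinite paths\<close>

locale ranked_obligations =
  fixes S :: "'s set" and R :: "'s \<Rightarrow> 's \<Rightarrow> bool"
    and pending :: "'u \<Rightarrow> 's \<Rightarrow> bool" and rank :: "'u \<Rightarrow> 's \<Rightarrow> nat"
  assumes serial: "s \<in> S \<Longrightarrow> \<exists>t\<in>S. R s t"
    and progress: "s \<in> S \<Longrightarrow> pending u s \<Longrightarrow> \<exists>t\<in>S. R s t \<and> rank u t < rank u s"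

locale scheduled_run = ranked_obligations S R pending rank
  for S :: "'s set" and R and pending :: "'u \<Rightarrow> 's \<Rightarrow> bool" and rank +
  fixes sched :: "nat \<Rightarrow> 'u" and s0 :: 's
  assumes s0_in_S: "s0 \<in> S"
begin

definition next_state :: "'s \<times> nat \<Rightarrow> 's \<times> nat" where
  "next_state = (\<lambda>(s, c).
     if pending (sched c) s then (SOME t. t \<in> S \<and> R s t \<and> rank (sched c) t < rank (sched c) s, c)
     else (SOME t. t \<in> S \<and> R s t, Suc c))"

definition state :: "nat \<Rightarrow> 's" where
  "state i = fst ((next_state ^^ i) (s0, 0))"

definition counter :: "nat \<Rightarrow> nat" where
  "counter i = snd ((next_state ^^ i) (s0, 0))"

lemma run_Suc: "(state (Suc i), counter (Suc i)) = next_state (state i, counter i)"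
  by (simp add: state_def counter_def)

lemma run_step:
  assumes "state i \<in> S"
  shows "state (Suc i) \<in> S \<and> R (state i) (state (Suc i))"
    and "pending (sched (counter i)) (state i) \<Longrightarrow>
      counter (Suc i) = counter i \<and>
      rank (sched (counter i)) (state (Suc i)) < rank (sched (counter i)) (state i)"
    and "\<not> pending (sched (counter i)) (state i) \<Longrightarrow> counter (Suc i) = Suc (counter i)"
proof -
  let ?s = "state i" and ?u = "sched (counter i)"
  have progress_choice: "state (Suc i) \<in> S \<and> R ?s (state (Suc i)) \<and>
      rank ?u (state (Suc i)) < rank ?u ?s \<and> counter (Suc i) = counter i" if "pending ?u ?s"
    using someI_ex[OF progress[OF assms that, unfolded Bex_def]] run_Suc[of i] that
    by (auto simp: next_state_def)
  have serial_choice: "state (Suc i) \<in> S \<and> R ?s (state (Suc i)) \<and>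
      counter (Suc i) = Suc (counter i)" if "\<not> pending ?u ?s"
    using someI_ex[OF serial[OF assms, unfolded Bex_def]] run_Suc[of i] that
    by (auto simp: next_state_def)
  show "state (Suc i) \<in> S \<and> R ?s (state (Suc i))"
    using progress_choice serial_choice by blast
  show "pending ?u ?s \<Longrightarrow> counter (Suc i) = counter i \<and> rank ?u (state (Suc i)) < rank ?u ?s"
    using progress_choice by blast
  show "\<not> pending ?u ?s \<Longrightarrow> counter (Suc i) = Suc (counter i)"
    using serial_choice by blast
qed

lemma state_in_S: "state i \<in> S"
proof (induction i)
  case 0
  then show ?case using s0_in_S by (simp add: state_def)
next
  case (Suc i)
  then show ?case using run_step(1) by blast
qed

lemma current_obligation_discharged:
  "\<exists>j\<ge>i. counter j = counter i \<and> \<not> pending (sched (counter i)) (state j)"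
proof (induction "rank (sched (counter i)) (state i)" arbitrary: i rule: less_induct)
  case less
  show ?case
  proof (cases "pending (sched (counter i)) (state i)")
    case True
    then have "counter (Suc i) = counter i"
      "rank (sched (counter i)) (state (Suc i)) < rank (sched (counter i)) (state i)"
      using run_step(2)[OF state_in_S] by blast+
    with less[of "Suc i"] show ?thesis
      by (metis Suc_leD)
  qed blast
qed

lemma every_scheduled_obligation_discharged:
  "counter i \<le> c \<Longrightarrow> \<exists>j\<ge>i. counter j = c \<and> \<not> pending (sched c) (state j)"
proof (induction c rule: dec_induct)
  case base
  show ?case using current_obligation_discharged by blast
next
  case (step c)
  then obtain j where j: "j \<ge> i" "counter j = c" "\<not> pending (sched c) (state j)"
    by blast
  then have "counter (Suc j) = Suc c"
    using run_step(3)[OF state_in_S] by blast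
  moreover obtain j' where "j' \<ge> Suc j" "counter j' = counter (Suc j)"
    "\<not> pending (sched (counter (Suc j))) (state j')"
    using current_obligation_discharged by blast
  ultimately show ?case
    using j(1) by (intro exI[of _ j']) auto
qed

lemma fair_state_sequence:
  assumes "\<forall>c. \<exists>c'\<ge>c. sched c' = u"
  shows "\<exists>j\<ge>i. \<not> pending u (state j)"
  using assms every_scheduled_obligation_discharged[of i] by metis

end

context ranked_obligations
begin

lemma fair_path_exists:
  assumes "finite U" "s0 \<in> S"
  shows "\<exists>p. p 0 = s0 \<and> (\<forall>i. p i \<in> S \<and> R (p i) (p (Suc i))) \<and>
    (\<forall>u\<in>U. \<forall>i. \<exists>j\<ge>i. \<not> pending u (p j))"
proof -
  obtain us where us: "set us = U"
    using finite_list[OF assms(1)] by blast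
  define sched where "sched c = us ! (c mod length us)" for c
  have sched_fair: "\<forall>c. \<exists>c'\<ge>c. sched c' = u" if "u \<in> U" for u
  proof
    fix c
    obtain k where k: "k < length us" "us ! k = u"
      using \<open>u \<in> U\<close> us by (metis in_set_conv_nth)
    have "sched (c * length us + k) = u"
      using k by (simp add: sched_def)
    moreover have "c \<le> c * length us + k"
      using k by (simp add: trans_le_add1)
    ultimately show "\<exists>c'\<ge>c. sched c' = u"
      by blast
  qed
  interpret scheduled_run S R pending rank sched s0
    by unfold_locales (fact assms(2))
  show ?thesis
    using state_in_S run_step(1)[OF state_in_S] fair_state_sequence sched_fair
    by (intro exI[of _ state]) (auto simp: state_def)
qed

end

section \<open>Extension to acceptable chains\<close>

lemma finite_acceptable_extension:
  assumes xs: "is_chain E \<phi> (nth xs) (enat (length xs))" and "Until TT (Next FF) \<in> last xs"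
  shows "\<exists>f m. is_chain E \<phi> f (enat m) \<and> acceptable f (enat m) \<and> prefix_of xs f (enat m)"
proof -
  note last = list_chain_last[OF xs]
  obtain k where "reaches E \<phi> (Next FF) k (last xs)"
    using eventuality_reachable[OF last(2) assms(2)] by blast
  then obtain p where p: "p 0 = last xs" "Next FF \<in> p k" "is_chain E \<phi> p (enat (Suc k))"
    using reaches_chain[OF _ last(2)] by blast
  define m where "m = length xs + k"
  let ?g = "extend_chain xs p"
  have "enat (length xs - 1) + enat (Suc k) = enat m"
    using last(1) by (simp add: m_def)
  then have g: "is_chain E \<phi> ?g (enat m)" "prefix_of xs ?g (enat m)"
    using is_chain_extend_chain[OF xs p(3,1)] prefix_of_extend_chain[OF last(1), of "enat (Suc k)" p]
    by (simp_all add: zero_enat_def)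
  have last_FF: "Next FF \<in> ?g (m - 1)"
    using extend_chain_tail[of xs p "m - 1", OF last(1) p(1)] p(2) last(1) by (simp add: m_def)
  have last_atom: "atom E \<phi> (?g (m - 1))"
    using is_chain_atom[OF g(1)] last(1) by (simp add: m_def)
  have "fulfils_from (m - 1) ?g (enat m)"
    unfolding fulfils_from_def
  proof (intro allI impI)
    fix i a b assume "m - 1 \<le> i" "enat i < enat m" "Until a b \<in> ?g i"
    moreover from calculation have "i = m - 1"
      by simp
    ultimately show "\<exists>j\<ge>i. enat j < enat m \<and> b \<in> ?g j"
      using Next_FF_fulfils_Until[OF last_atom last_FF] by blast
  qed
  moreover have "enat (m - 1) < enat m"
    using last(1) by (simp add: m_def)
  ultimately have "acceptable ?g (enat m)"
    using chain_acceptableI[OF g(1)] by blast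
  with g show ?thesis
    by blast
qed

definition pending_Until :: "'p ltl \<Rightarrow> 'p ltl set \<Rightarrow> bool" where
  "pending_Until u V \<longleftrightarrow> (\<exists>a b. u = Until a b \<and> u \<in> V \<and> b \<notin> V)"

definition fulfilment_distance :: "'p ltl set \<Rightarrow> 'p ltl \<Rightarrow> 'p ltl \<Rightarrow> 'p ltl set \<Rightarrow> nat" where
  "fulfilment_distance E \<phi> u V = (case u of Until a b \<Rightarrow> LEAST n. reaches E \<phi> b n V | _ \<Rightarrow> 0)"

lemma ranked_obligations_atoms:
  fixes \<phi> :: "'p ltl"
  assumes P_step: "\<And>V W. atom E \<phi> V \<Longrightarrow> atom E \<phi> W \<Longrightarrow> step E V W \<Longrightarrow> P V \<Longrightarrow> P W"
    and P_not_final: "\<And>V. atom E \<phi> V \<Longrightarrow> P V \<Longrightarrow> prov E (Imp (conj_set V) (Neg (Next FF)))"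
  shows "ranked_obligations {V. atom E \<phi> V \<and> P V} (step E) pending_Until (fulfilment_distance E \<phi>)"
proof
  fix V assume "V \<in> {V. atom E \<phi> V \<and> P V}"
  then have V: "atom E \<phi> V" "P V"
    by simp_all
  then obtain W where "atom E \<phi> W" "step E V W"
    using atom_has_successor P_not_final by blast
  with V show "\<exists>W\<in>{V. atom E \<phi> V \<and> P V}. step E V W"
    using P_step by blast
next
  fix V u assume V: "V \<in> {V. atom E \<phi> V \<and> P V}" and "pending_Until u V"
  then obtain a b where u: "u = Until a b" "Until a b \<in> V" "b \<notin> V"
    unfolding pending_Until_def by blast
  define r where "r = (LEAST n. reaches E \<phi> b n V)"
  have "reaches E \<phi> b r V"
    unfolding r_def by (rule LeastI_ex) (use eventuality_reachable V u in blast)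
  with u obtain W d where "r = Suc d" "atom E \<phi> W" "step E V W" "reaches E \<phi> b d W"
    by (cases r) auto
  moreover from calculation have "fulfilment_distance E \<phi> u W < fulfilment_distance E \<phi> u V"
    using Least_le[of "\<lambda>n. reaches E \<phi> b n W" d] by (simp add: fulfilment_distance_def u r_def)
  ultimately show "\<exists>W\<in>{V. atom E \<phi> V \<and> P V}. step E V W \<and>
      fulfilment_distance E \<phi> u W < fulfilment_distance E \<phi> u V"
    using P_step V by blast
qed

lemma fair_infinite_chain:
  fixes \<phi> :: "'p ltl"
  assumes V: "atom E \<phi> V" "P V"
    and P_step: "\<And>V W. atom E \<phi> V \<Longrightarrow> atom E \<phi> W \<Longrightarrow> step E V W \<Longrightarrow> P V \<Longrightarrow> P W"
    and P_not_final: "\<And>V. atom E \<phi> V \<Longrightarrow> P V \<Longrightarrow> prov E (Imp (conj_set V) (Neg (Next FF)))"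
  shows "\<exists>p. p 0 = V \<and> is_chain E \<phi> p \<infinity> \<and> fulfils_from 0 p \<infinity>"
proof -
  interpret ranked_obligations "{V. atom E \<phi> V \<and> P V}" "step E" pending_Until "fulfilment_distance E \<phi>"
    using P_step P_not_final by (rule ranked_obligations_atoms)
  obtain p where p: "p 0 = V" "\<forall>i. atom E \<phi> (p i) \<and> P (p i) \<and> step E (p i) (p (Suc i))"
    and fair: "\<forall>u\<in>cl' \<phi>. \<forall>i. \<exists>j\<ge>i. \<not> pending_Until u (p j)"
    using fair_path_exists[OF finite_cl'[of \<phi>], of V] V by (simp only: mem_Collect_eq) blast
  have ch: "is_chain E \<phi> p \<infinity>"
    using p(2) by (simp add: is_chain_def)
  have "fulfils_from 0 p \<infinity>"
    unfolding fulfils_from_def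
  proof (intro allI impI)
    fix i a b assume U: "Until a b \<in> p i"
    show "\<exists>j\<ge>i. enat j < \<infinity> \<and> b \<in> p j"
    proof (rule ccontr)
      assume "\<not> (\<exists>j\<ge>i. enat j < \<infinity> \<and> b \<in> p j)"
      then have "pending_Until (Until a b) (p j)" if "j \<ge> i" for j
        using Until_persists_in_chain[OF ch U that] that by (auto simp: pending_Until_def)
      moreover have "Until a b \<in> cl' \<phi>"
        using atom_Until_in_cl' p(2) U by blast
      ultimately show False
        using fair by blast
    qed
  qed
  with p ch show ?thesis
    by blast
qed

lemma infinite_acceptable_extension:
  assumes xs: "is_chain E \<phi> (nth xs) (enat (length xs))" and "P (last xs)"
    and P_step: "\<And>W W'. atom E \<phi> W \<Longrightarrow> atom E \<phi> W' \<Longrightarrow> step E W W' \<Longrightarrow> P W \<Longrightarrow> P W'"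
    and P_not_final: "\<And>W. atom E \<phi> W \<Longrightarrow> P W \<Longrightarrow> prov E (Imp (conj_set W) (Neg (Next FF)))"
  shows "\<exists>f. is_chain E \<phi> f \<infinity> \<and> acceptable f \<infinity> \<and> prefix_of xs f \<infinity>"
proof -
  note last = list_chain_last[OF xs]
  let ?k = "length xs - 1"
  obtain p where p: "p 0 = last xs" "is_chain E \<phi> p \<infinity>" "fulfils_from 0 p \<infinity>"
    using fair_infinite_chain[of E \<phi> "last xs" P, OF last(2) assms(2)] P_step P_not_final by blast
  let ?g = "extend_chain xs p"
  note tail = extend_chain_tail[of xs p, OF last(1) p(1)]
  have g: "is_chain E \<phi> ?g \<infinity>" "prefix_of xs ?g \<infinity>"
    using is_chain_extend_chain[OF xs p(2,1)] prefix_of_extend_chain[OF last(1), of \<infinity> p] by simp_all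
  have "fulfils_from ?k ?g \<infinity>"
    unfolding fulfils_from_def
  proof (intro allI impI)
    fix i a b assume "?k \<le> i" "Until a b \<in> ?g i"
    then have "Until a b \<in> p (i - ?k)"
      using tail by simp
    then obtain j where "j \<ge> i - ?k" "b \<in> p j"
      using p(3) by (force simp: fulfils_from_def)
    with \<open>?k \<le> i\<close> show "\<exists>j\<ge>i. enat j < \<infinity> \<and> b \<in> ?g j"
      using tail[of "j + ?k"] by (intro exI[of _ "j + ?k"]) auto
  qed
  then have "acceptable ?g \<infinity>"
    using chain_acceptableI[OF g(1)] by simp
  with g show ?thesis
    by blast
qed

lemma AXinf_not_final: "prov AXinf (Imp (conj_set V) (Neg (Next FF)))"
proof -
  have "prov AXinf (Neg (Next FF))"
    by (rule prov.Extra) (simp add: AXinf_def)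
  then show ?thesis
    by (rule prov_taut_consequence1) simp
qed

lemma AXfin_atom_eventually_final:
  assumes "atom AXfin \<phi> V"
  shows "Until TT (Next FF) \<in> V"
proof (rule atom_member_if_proves[OF assms])
  show "Until TT (Next FF) \<in> cl \<phi>"
    by (rule cl'_subset_cl, rule cl'.ev)
  have "prov AXfin (Ev (Next FF))"
    by (rule prov.Extra) (simp add: AXfin_def)
  then show "prov AXfin (Imp (conj_set V) (Until TT (Next FF)))"
    by (rule prov_taut_consequence1) (simp add: Ev_def)
qed

theorem lemma1:
  fixes \<phi> :: "'p ltl"
  shows "(\<forall>xs. is_chain AXgen \<phi> (nth xs) (enat (length xs)) \<longrightarrow>
            (\<exists>f n. is_chain AXgen \<phi> f n \<and> acceptable f n \<and> prefix_of xs f n))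
       \<and> (\<forall>xs. is_chain AXinf \<phi> (nth xs) (enat (length xs)) \<longrightarrow>
            (\<exists>f. is_chain AXinf \<phi> f \<infinity> \<and> acceptable f \<infinity> \<and> prefix_of xs f \<infinity>))
       \<and> (\<forall>xs. is_chain AXfin \<phi> (nth xs) (enat (length xs)) \<longrightarrow>
            (\<exists>f m. is_chain AXfin \<phi> f (enat m) \<and> acceptable f (enat m) \<and> prefix_of xs f (enat m)))"
proof (intro conjI allI impI)
  fix xs assume xs: "is_chain AXgen \<phi> (nth xs) (enat (length xs))"
  show "\<exists>f n. is_chain AXgen \<phi> f n \<and> acceptable f n \<and> prefix_of xs f n"
  proof (cases "Until TT (Next FF) \<in> last xs")
    case True
    then show ?thesis
      using finite_acceptable_extension[OF xs] by blast
  next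
    case False
    then have "Neg (Until TT (Next FF)) \<in> last xs"
      using atom_member_or_Neg_member[OF list_chain_last(2)[OF xs] cl'.ev] by blast
    then show ?thesis
      using infinite_acceptable_extension[OF xs, of "\<lambda>W. Neg (Until TT (Next FF)) \<in> W"]
        Neg_Until_step TT_in_atom atom_never_final by blast
  qed
next
  fix xs assume xs: "is_chain AXinf \<phi> (nth xs) (enat (length xs))"
  show "\<exists>f. is_chain AXinf \<phi> f \<infinity> \<and> acceptable f \<infinity> \<and> prefix_of xs f \<infinity>"
    using infinite_acceptable_extension[OF xs, of "\<lambda>_. True"] AXinf_not_final by blast
next
  fix xs assume xs: "is_chain AXfin \<phi> (nth xs) (enat (length xs))"
  show "\<exists>f m. is_chain AXfin \<phi> f (enat m) \<and> acceptable f (enat m) \<and> prefix_of xs f (enat m)"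
    using finite_acceptable_extension[OF xs] AXfin_atom_eventually_final list_chain_last(2)[OF xs]
    by blast
qed

end
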